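(* Let $\Sigma,\Gamma$ be finite alphabets, $w \in \Sigma^+$, $h:\Sigma^*\to\Gamma^*$ an injective morphism, and suppose $h(w) = x^r$ with $x \in \Gamma^+$ of minimal length and $r \in \mathbb{Q}$. If $a\in\Sigma$ satisfies $|h(a)| \ge |x|$ and $ava$ and $aua$ are factors of $w$ for some words $u, v \in (\Sigma\setminus\{a\})^*$, then $u = v$.
   Context: For a nonempty word $x$ and rational $r$ with $r|x|$ a nonnegative integer, $x^r$ denotes the prefix of length $r|x|$ of the infinite word $xxx\cdots$. *)

theory Defs
  imports Complex_Main "HOL-Library.Sublist"
begin

definition morphism :: "('a list \<Rightarrow> 'b list) \<Rightarrow> bool" where
  "morphism h \<longleftrightarrow> (\<forall>u v. h (u @ v) = h u @ h v)"

definition inf_pow_prefix :: "'b list \<Rightarrow> nat \<Rightarrow> 'b list" where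
  "inf_pow_prefix x n = map (\<lambda>i. x ! (i mod length x)) [0..<n]"

text \<open>Fractional power x^r: defined when x nonempty and r*|x| is a nonnegative integer.\<close>
definition frac_pow :: "'b list \<Rightarrow> rat \<Rightarrow> 'b list" where
  "frac_pow x r = inf_pow_prefix x (nat \<lfloor>r * of_nat (length x)\<rfloor>)"

definition is_frac_pow_of :: "'b list \<Rightarrow> 'b list \<Rightarrow> rat \<Rightarrow> bool" where
  "is_frac_pow_of y x r \<longleftrightarrow> x \<noteq> [] \<and> r * of_nat (length x) \<in> \<nat> \<and> y = frac_pow x r"

end

theory Submission
  imports Defs
begin

text \<open>
  A shortest root x of h(w) is primitive: a nontrivial rotation fixing x would give a shorter
  root. A factor of length at least |x| of the infinite power of x determines its position
  modulo |x|. The two occurrences of h(a) around h(v) therefore lie at congruent positions, so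
  |h(a v)| is a multiple of |x|; the same holds for h(a u), and all four occurrences of h(a)
  have the same phase. Hence h(a v) and h(a u) are powers of one conjugate of x and commute;
  injectivity of h gives a v a u = a u a v, which forces u = v because a occurs in neither.
\<close>

lemma length_inf_pow_prefix [simp]: "length (inf_pow_prefix x n) = n"
  by (simp add: inf_pow_prefix_def)

lemma nth_inf_pow_prefix [simp]: "k < n \<Longrightarrow> inf_pow_prefix x n ! k = x ! (k mod length x)"
  by (simp add: inf_pow_prefix_def)

lemma inf_pow_prefix_length_self: "inf_pow_prefix x (length x) = x"
  by (rule nth_equalityI) auto

lemma take_inf_pow_prefix: "take m (inf_pow_prefix x n) = inf_pow_prefix x (min m n)"
  by (rule nth_equalityI) auto

lemma drop_inf_pow_prefix:
  assumes "x \<noteq> []"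
  shows "drop m (inf_pow_prefix x n) = inf_pow_prefix (rotate m x) (n - m)"
proof (rule nth_equalityI)
  fix k assume "k < length (drop m (inf_pow_prefix x n))"
  then have "drop m (inf_pow_prefix x n) ! k = x ! ((m + k) mod length x)"
    by (simp add: add.commute)
  also have "\<dots> = rotate m x ! (k mod length x)"
    using assms by (simp add: nth_rotate mod_add_right_eq)
  finally show "drop m (inf_pow_prefix x n) ! k = inf_pow_prefix (rotate m x) (n - m) ! k"
    using \<open>k < _\<close> by simp
qed simp

lemma inf_pow_prefix_append:
  assumes "length x dvd m"
  shows "inf_pow_prefix x m @ inf_pow_prefix x n = inf_pow_prefix x (m + n)"
proof (rule nth_equalityI)
  fix k assume "k < length (inf_pow_prefix x m @ inf_pow_prefix x n)"
  moreover have "(k - m) mod length x = k mod length x" if "m \<le> k"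
  proof -
    obtain c where "m = length x * c" using assms by (rule dvdE)
    then have "k = (k - m) + length x * c" using that by simp
    then show ?thesis by (metis mod_mult_self2 mult.commute)
  qed
  ultimately show "(inf_pow_prefix x m @ inf_pow_prefix x n) ! k = inf_pow_prefix x (m + n) ! k"
    by (auto simp: nth_append)
qed simp

lemma factor_of_inf_pow_prefix:
  assumes "x \<noteq> []" and "inf_pow_prefix x n = P @ z @ S"
  shows "z = inf_pow_prefix (rotate (length P) x) (length z)"
proof -
  have "z = take (length z) (drop (length P) (inf_pow_prefix x n))"
    using assms(2) by simp
  also have "\<dots> = inf_pow_prefix (rotate (length P) x) (min (length z) (n - length P))"
    using assms(1) by (simp add: drop_inf_pow_prefix take_inf_pow_prefix)
  also have "min (length z) (n - length P) = length z"
    using arg_cong[OF assms(2), of length] by simp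
  finally show ?thesis .
qed

lemma eq_if_inf_pow_prefix_eq:
  assumes "inf_pow_prefix x L = inf_pow_prefix x' L"
    and "length x' = length x" and "length x \<le> L"
  shows "x = x'"
proof -
  have "y = take (length x) (inf_pow_prefix y L)" if "length y = length x" for y :: "'a list"
    using that assms(3) inf_pow_prefix_length_self[of y]
    by (simp add: take_inf_pow_prefix min_absorb1)
  then show ?thesis using assms(1,2) by metis
qed

lemma rotate_eq_self_if_rotate_add_eq:
  assumes "rotate i x = rotate (i + m) x"
  shows "rotate m x = x"
proof (cases "x = []")
  case False
  let ?c = "length x * i - i"
  have c: "?c + i = length x * i"
    using False by (simp add: Suc_le_eq)
  \<comment> \<open>rotate ?c undoes rotate i, as ?c + i is a multiple of the length\<close>
  have "x = rotate ?c (rotate i x)"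
    using c by (simp add: rotate_rotate)
  also have "\<dots> = rotate (length x * i + m) x"
    using assms c by (simp add: rotate_rotate add.assoc[symmetric])
  also have "\<dots> = rotate m x"
    by (subst (1 2) rotate_conv_mod) simp
  finally show ?thesis by simp
qed simp

lemma inf_pow_prefix_take_if_rotate_eq_self:
  assumes "rotate d x = x" and "0 < d" and "d \<le> length x"
  shows "inf_pow_prefix (take d x) n = inf_pow_prefix x n"
proof -
  define f where "f k = x ! (k mod length x)" for k
  have "f (k + d) = f k" for k
  proof -
    have "rotate d x ! (k mod length x) = x ! ((d + k mod length x) mod length x)"
      using assms(2,3) by (intro nth_rotate mod_less_divisor) linarith
    then have "f (k + d) = rotate d x ! (k mod length x)"
      by (simp add: f_def mod_add_right_eq add.commute[of k])
    then show ?thesis using assms(1) by (simp add: f_def)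
  qed
  then have shift: "f (j + d * q) = f j" for j q
  proof (induction q)
    case (Suc q)
    have "j + d * Suc q = (j + d * q) + d" by simp
    then show ?case using Suc by (metis \<open>\<And>k. f (k + d) = f k\<close>)
  qed simp
  show ?thesis
  proof (rule nth_equalityI)
    fix k assume "k < length (inf_pow_prefix (take d x) n)"
    have "f k = f (k mod d)"
      using shift[of "k mod d" "k div d"] by simp
    moreover have "k mod d < length x"
      using assms(2,3) by (meson mod_less_divisor order_less_le_trans)
    ultimately show "inf_pow_prefix (take d x) n ! k = inf_pow_prefix x n ! k"
      using \<open>k < _\<close> assms(2,3) by (simp add: f_def min_absorb1)
  qed simp
qed

lemma inf_pow_prefix_if_is_frac_pow_of:
  "is_frac_pow_of y x r \<Longrightarrow> y = inf_pow_prefix x (length y)"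
  by (simp add: is_frac_pow_of_def frac_pow_def)

lemma is_frac_pow_of_inf_pow_prefix:
  assumes "x \<noteq> []"
  shows "is_frac_pow_of (inf_pow_prefix x n) x (of_nat n / of_nat (length x))"
  using assms by (simp add: is_frac_pow_of_def frac_pow_def)

text \<open>For nonempty x this is equivalent to x not being a proper power.\<close>
definition primitive :: "'a list \<Rightarrow> bool" where
  "primitive x \<longleftrightarrow> x \<noteq> [] \<and> (\<forall>d. rotate d x = x \<longrightarrow> length x dvd d)"

lemma primitive_if_shortest_root:
  assumes root: "is_frac_pow_of y x r"
    and shortest: "\<forall>x' r'. is_frac_pow_of y x' r' \<longrightarrow> length x \<le> length x'"
  shows "primitive x"
  unfolding primitive_def
proof (intro conjI allI impI)
  show "x \<noteq> []" using root by (simp add: is_frac_pow_of_def)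
  fix d assume "rotate d x = x"
  define e where "e = d mod length x"
  show "length x dvd d"
  proof (rule ccontr)
    assume "\<not> length x dvd d"
    then have e: "0 < e" "e < length x"
      using \<open>x \<noteq> []\<close> by (simp_all add: e_def dvd_eq_mod_eq_0)
    have "rotate e x = x"
      using \<open>rotate d x = x\<close> by (metis e_def rotate_conv_mod)
    then have "y = inf_pow_prefix (take e x) (length y)"
      using e inf_pow_prefix_if_is_frac_pow_of[OF root]
      by (simp add: inf_pow_prefix_take_if_rotate_eq_self)
    moreover have "is_frac_pow_of (inf_pow_prefix (take e x) (length y)) (take e x)
        (of_nat (length y) / of_nat e)"
      using e \<open>x \<noteq> []\<close> is_frac_pow_of_inf_pow_prefix[of "take e x" "length y"]
      by (simp add: min_absorb1)
    ultimately have "is_frac_pow_of y (take e x) (of_nat (length y) / of_nat e)"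
      by simp
    then show False
      using shortest e by fastforce
  qed
qed

lemma rotate_eq_if_same_long_factor:
  assumes "x \<noteq> []" and "length x \<le> length A"
    and "inf_pow_prefix x n = P @ A @ S" and "inf_pow_prefix x n' = P' @ A @ S'"
  shows "rotate (length P) x = rotate (length P') x"
proof (rule eq_if_inf_pow_prefix_eq)
  show "inf_pow_prefix (rotate (length P) x) (length A)
      = inf_pow_prefix (rotate (length P') x) (length A)"
    using factor_of_inf_pow_prefix[OF assms(1,3)] factor_of_inf_pow_prefix[OF assms(1,4)] by simp
qed (use assms(2) in simp_all)

lemma length_dvd_return_word:
  assumes "primitive x" and "length x \<le> length A"
    and "inf_pow_prefix x n = P @ A @ Z @ A @ S"
  shows "length x dvd length (A @ Z)"
proof -
  have "x \<noteq> []" using assms(1) by (simp add: primitive_def)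
  moreover have "inf_pow_prefix x n = (P @ A @ Z) @ A @ S" using assms(3) by simp
  ultimately have "rotate (length P) x = rotate (length (P @ A @ Z)) x"
    by (rule rotate_eq_if_same_long_factor[OF _ assms(2) assms(3)])
  then have "rotate (length P) x = rotate (length P + length (A @ Z)) x"
    by simp
  then have "rotate (length (A @ Z)) x = x"
    by (rule rotate_eq_self_if_rotate_add_eq)
  then show ?thesis using assms(1) by (simp add: primitive_def)
qed

lemma return_words_commute:
  assumes "primitive x" and "length x \<le> length A"
    and occ1: "inf_pow_prefix x n = P @ A @ Z @ A @ S"
    and occ2: "inf_pow_prefix x n' = P' @ A @ Z' @ A @ S'"
  shows "(A @ Z) @ (A @ Z') = (A @ Z') @ (A @ Z)"
proof -
  have "x \<noteq> []" using assms(1) by (simp add: primitive_def)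
  define x' where "x' = rotate (length P) x"
  have "rotate (length P') x = x'"
    using rotate_eq_if_same_long_factor[OF \<open>x \<noteq> []\<close> assms(2) occ1 occ2] by (simp add: x'_def)
  then have pow: "A @ Z = inf_pow_prefix x' (length (A @ Z))"
    "A @ Z' = inf_pow_prefix x' (length (A @ Z'))"
    using factor_of_inf_pow_prefix[OF \<open>x \<noteq> []\<close>, of n P "A @ Z" "A @ S"]
      factor_of_inf_pow_prefix[OF \<open>x \<noteq> []\<close>, of n' P' "A @ Z'" "A @ S'"] occ1 occ2
    by (simp_all add: x'_def)
  have "length x' dvd length (A @ Z)" "length x' dvd length (A @ Z')"
    using length_dvd_return_word[OF assms(1,2)] occ1 occ2 by (simp_all add: x'_def)
  then have "inf_pow_prefix x' (length (A @ Z)) @ inf_pow_prefix x' (length (A @ Z'))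
      = inf_pow_prefix x' (length (A @ Z')) @ inf_pow_prefix x' (length (A @ Z))"
    by (simp add: inf_pow_prefix_append add.commute)
  then show ?thesis
    unfolding pow[symmetric] .
qed

lemma eq_if_append_Cons_swap:
  assumes "v @ a # u = u @ a # v" and "a \<notin> set u" and "a \<notin> set v"
  shows "u = v"
proof -
  have "takeWhile (\<lambda>c. c \<noteq> a) (z @ a # z') = z" if "a \<notin> set z" for z z'
    using that by (induction z) auto
  then show ?thesis using assms by metis
qed

theorem lemma6:
  fixes w :: "'a::finite list" and h :: "'a list \<Rightarrow> 'b::finite list"
    and x :: "'b list" and r :: rat and a :: 'a and u v :: "'a list"
  assumes "w \<noteq> []"
    and "morphism h" and "inj h"
    and "is_frac_pow_of (h w) x r"
    and "\<forall>x' r'. is_frac_pow_of (h w) x' r' \<longrightarrow> length x \<le> length x'"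
    and "length (h [a]) \<ge> length x"
    and "a \<notin> set u" and "a \<notin> set v"
    and "sublist ([a] @ v @ [a]) w" and "sublist ([a] @ u @ [a]) w"
  shows "u = v"
proof -
  have hom: "h (s @ t) = h s @ h t" for s t
    using assms(2) by (simp add: morphism_def)
  have pow: "h w = inf_pow_prefix x (length (h w))"
    using assms(4) by (rule inf_pow_prefix_if_is_frac_pow_of)
  obtain P S where w1: "w = P @ [a] @ v @ [a] @ S"
    using assms(9) unfolding sublist_def by force
  obtain P' S' where w2: "w = P' @ [a] @ u @ [a] @ S'"
    using assms(10) unfolding sublist_def by force
  have "inf_pow_prefix x (length (h w)) = h P @ h [a] @ h v @ h [a] @ h S"
    using pow unfolding w1 hom by (rule sym)
  moreover have "inf_pow_prefix x (length (h w)) = h P' @ h [a] @ h u @ h [a] @ h S'"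
    using pow unfolding w2 hom by (rule sym)
  ultimately have "(h [a] @ h v) @ (h [a] @ h u) = (h [a] @ h u) @ (h [a] @ h v)"
    using primitive_if_shortest_root[OF assms(4,5)] assms(6) by (intro return_words_commute)
  then have "h (([a] @ v) @ ([a] @ u)) = h (([a] @ u) @ ([a] @ v))"
    unfolding hom .
  then have "v @ a # u = u @ a # v"
    using assms(3) by (simp add: inj_eq)
  then show ?thesis
    using assms(7,8) by (rule eq_if_append_Cons_swap)
qed

end
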